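(* Consider the setting and SCSG algorithm described in the context, with $\hat A$ nonsingular and $\hat C$ positive definite, and step size $0\le\sigma_\theta\le\frac{\lambda_{\min}}{6\kappa(Q)^2L_G^2}$ (with $\sigma_\omega=\beta\sigma_\theta$). Then for every epoch index $m$, $$\mathbb{E}\|Q^{-1}\Delta_m\|^2=\mathbb{E}\|Q^{-1}\Delta_{m-1,K_{m-1}}\|^2<\infty\ (m\ge1),\qquad\text{i.e. } \mathbb{E}\|Q^{-1}(z_m-z^\star)\|^2<\infty,$$ where the expectation includes the randomness of the geometrically distributed inner-loop lengths.
   Context: Data: $n$ transitions $(s_t,a_t,r_t,s_{t+1})$, $t\in[n]=\{1,\dots,n\}$, a feature map $\phi$ from states to $\mathbb{R}^d$ and a discount factor $\gamma$. Define $\hat A_t=\phi(s_t)(\phi(s_t)-\gamma\phi(s_{t+1}))^\top$, $\hat b_t=r_t\phi(s_t)$, $\hat C_t=\phi(s_t)\phi(s_t)^\top$, and $\hat A,\hat b,\hat C$ their averages over $t\in[n]$; then $(\theta^\star,\omega^\star)=(\hat A^{-1}\hat b,0)$. Let $\beta=\frac{8\lambda_{\max}(\hat A^\top\hat C^{-1}\hat A)}{\lambda_{\min}(\hat C)}$. For $t\in[n]$ set $G_t=\begin{pmatrix}0&-\sqrt\beta\hat A_t^\top\\ \sqrt\beta\hat A_t&\beta\hat C_t\end{pmatrix}$, $g_t=\begin{pmatrix}0\\ \sqrt\beta\hat b_t\end{pmatrix}$, $G=\frac1n\sum_tG_t$, $g=\frac1n\sum_tg_t$, $z^\star=(\theta^\star,\omega^\star/\sqrt\beta)$.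 With this $\beta$, $G$ is diagonalizable with real positive eigenvalues; fix $G=Q\Lambda Q^{-1}$ with $\Lambda$ diagonal. $\lambda_{\min}$ is the smallest eigenvalue of $G$; $\|\cdot\|$ is the Euclidean/spectral norm; $\kappa(Q)=\|Q\|\|Q^{-1}\|$; $L_G^2=\left\|\frac1n\sum_tG_t^\top G_t\right\|$. SCSG (in coordinates $z=(\theta,\omega/\sqrt\beta)$, fixed batch size $B$, deterministic initial point $z_0$): at the start of epoch $m$ the iterate is $z_m$. A subset $\mathcal B\subseteq[n]$ of size $B$ is sampled uniformly at random; $G_m=\frac1B\sum_{t\in\mathcal B}G_t$, $g_m=\frac1B\sum_{t\in\mathcal B}g_t$. Draw $K_m\sim\mathrm{Geom}(\frac B{B+1})$, i.e. $P(K_m=k)=(1-\gamma)\gamma^k$ for $k\ge0$ with $\gamma=\frac B{B+1}$. Set $z_{m,0}=z_m$; for $j=0,\dots,K_m-1$ sample $t_j$ uniformly from $[n]$ independently and set $z_{m,j+1}=z_{m,j}-\sigma_\theta\big(G_{t_j}z_{m,j}+(G_m-G_{t_j})z_m-g_m\big)$; then $z_{m+1}=z_{m,K_m}$. Define $\Delta_m=z_m-z^\star$ and $\Delta_{m,j}=z_{m,j}-z^\star$. *)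

theory Defs
  imports "HOL-Analysis.Analysis" "HOL-Probability.Probability"
begin

definition outer :: "real^'d \<Rightarrow> real^'d \<Rightarrow> real^'d^'d" where
  "outer u v = (\<chi> i j. u $ i * v $ j)"

definition eigvals :: "real^'n^'n \<Rightarrow> real set" where
  "eigvals M = {l. \<exists>v. v \<noteq> 0 \<and> M *v v = l *\<^sub>R v}"

definition lam_max :: "real^'n^'n \<Rightarrow> real" where
  "lam_max M = Max (eigvals M)"

definition lam_min :: "real^'n^'n \<Rightarrow> real" where
  "lam_min M = Min (eigvals M)"

definition mnorm :: "real^'n^'m \<Rightarrow> real" where
  "mnorm M = onorm (\<lambda>x. M *v x)"

definition pos_def :: "real^'n^'n \<Rightarrow> bool" where
  "pos_def M \<longleftrightarrow> transpose M = M \<and> (\<forall>x. x \<noteq> 0 \<longrightarrow> x \<bullet> (M *v x) > 0)"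

section \<open>Data: transitions t \<in> {1..n}: state s t, reward r t, next state s' t\<close>

definition At :: "('s \<Rightarrow> real^'d) \<Rightarrow> real \<Rightarrow> (nat \<Rightarrow> 's) \<Rightarrow> (nat \<Rightarrow> 's) \<Rightarrow> nat \<Rightarrow> real^'d^'d" where
  "At \<phi> disc s s' t = outer (\<phi> (s t)) (\<phi> (s t) - disc *\<^sub>R \<phi> (s' t))"

definition bt :: "('s \<Rightarrow> real^'d) \<Rightarrow> (nat \<Rightarrow> real) \<Rightarrow> (nat \<Rightarrow> 's) \<Rightarrow> nat \<Rightarrow> real^'d" where
  "bt \<phi> r s t = r t *\<^sub>R \<phi> (s t)"

definition Ct :: "('s \<Rightarrow> real^'d) \<Rightarrow> (nat \<Rightarrow> 's) \<Rightarrow> nat \<Rightarrow> real^'d^'d" where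
  "Ct \<phi> s t = outer (\<phi> (s t)) (\<phi> (s t))"

definition Ahat where "Ahat \<phi> disc s s' n = (1 / real n) *\<^sub>R (\<Sum>t\<in>{1..n}. At \<phi> disc s s' t)"
definition bhat where "bhat \<phi> r s n = (1 / real n) *\<^sub>R (\<Sum>t\<in>{1..n}. bt \<phi> r s t)"
definition Chat where "Chat \<phi> s n = (1 / real n) *\<^sub>R (\<Sum>t\<in>{1..n}. Ct \<phi> s t)"

definition theta_star where
  "theta_star \<phi> disc r s s' n = matrix_inv (Ahat \<phi> disc s s' n) *v bhat \<phi> r s n"

definition beta where
  "beta \<phi> disc s s' n =
     8 * lam_max (transpose (Ahat \<phi> disc s s' n) ** matrix_inv (Chat \<phi> s n) ** Ahat \<phi> disc s s' n)
       / lam_min (Chat \<phi> s n)"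

section \<open>Saddle-point system in coordinates z = (theta, omega / sqrt beta),
  indexed by 'd + 'd (Inl = theta block, Inr = second block)\<close>

definition blockG :: "real \<Rightarrow> real^'d^'d \<Rightarrow> real^'d^'d \<Rightarrow> real^('d+'d)^('d+'d)" where
  "blockG b A C = (\<chi> i j. case (i, j) of
      (Inl a, Inl c) \<Rightarrow> 0
    | (Inl a, Inr c) \<Rightarrow> - sqrt b * A $ c $ a
    | (Inr a, Inl c) \<Rightarrow> sqrt b * A $ a $ c
    | (Inr a, Inr c) \<Rightarrow> b * C $ a $ c)"

definition blockg :: "real \<Rightarrow> real^'d \<Rightarrow> real^('d+'d)" where
  "blockg b v = (\<chi> i. case i of Inl a \<Rightarrow> 0 | Inr a \<Rightarrow> sqrt b * v $ a)"

definition Gt where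
  "Gt \<phi> disc s s' n t = blockG (beta \<phi> disc s s' n) (At \<phi> disc s s' t) (Ct \<phi> s t)"
definition gt where
  "gt \<phi> disc r s s' n t = blockg (beta \<phi> disc s s' n) (bt \<phi> r s t)"
definition Gbar where
  "Gbar \<phi> disc s s' n = (1 / real n) *\<^sub>R (\<Sum>t\<in>{1..n}. Gt \<phi> disc s s' n t)"

text \<open>z* = (theta*, omega*/sqrt beta) with omega* = 0.\<close>
definition z_star :: "('s \<Rightarrow> real^'d) \<Rightarrow> real \<Rightarrow> (nat \<Rightarrow> real) \<Rightarrow> (nat \<Rightarrow> 's) \<Rightarrow> (nat \<Rightarrow> 's) \<Rightarrow> nat \<Rightarrow> real^('d+'d)" where
  "z_star \<phi> disc r s s' n =
     (\<chi> i. case i of Inl a \<Rightarrow> theta_star \<phi> disc r s s' n $ a | Inr a \<Rightarrow> 0)"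

definition LG2 where
  "LG2 \<phi> disc s s' n =
     mnorm ((1 / real n) *\<^sub>R (\<Sum>t\<in>{1..n}. transpose (Gt \<phi> disc s s' n t) ** Gt \<phi> disc s s' n t))"

definition kappa :: "real^'n^'n \<Rightarrow> real" where
  "kappa Q = mnorm Q * mnorm (matrix_inv Q)"

definition inner_step where
  "inner_step \<phi> disc r s s' n \<sigma> Gm gm zm z =
     map_pmf (\<lambda>t. z - \<sigma> *\<^sub>R (Gt \<phi> disc s s' n t *v z + (Gm - Gt \<phi> disc s s' n t) *v zm - gm))
       (pmf_of_set {1..n})"

definition inner_loop where
  "inner_loop \<phi> disc r s s' n \<sigma> Gm gm zm K =
     ((\<lambda>p. bind_pmf p (inner_step \<phi> disc r s s' n \<sigma> Gm gm zm)) ^^ K) (return_pmf zm)"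

text \<open>One epoch: uniform B-subset batch, K ~ Geom(B/(B+1)) i.e. P(K=k) = (1/(B+1)) (B/(B+1))^k.\<close>
definition epoch where
  "epoch \<phi> disc r s s' n B \<sigma> zm =
     bind_pmf (pmf_of_set {S. S \<subseteq> {1..n} \<and> card S = B}) (\<lambda>S.
       bind_pmf (geometric_pmf (1 / (real B + 1))) (\<lambda>K.
         inner_loop \<phi> disc r s s' n \<sigma>
           ((1 / real B) *\<^sub>R (\<Sum>t\<in>S. Gt \<phi> disc s s' n t))
           ((1 / real B) *\<^sub>R (\<Sum>t\<in>S. gt \<phi> disc r s s' n t))
           zm K))"

definition scsg_dist where
  "scsg_dist \<phi> disc r s s' n B \<sigma> z0 m =
     ((\<lambda>p. bind_pmf p (epoch \<phi> disc r s s' n B \<sigma>)) ^^ m) (return_pmf z0)"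

end

theory Submission
  imports Defs
begin

(*
  Measure errors in the eigenbasis of Gbar, i.e. through V(z) = |Q^-1 (z - c)|^2.  There the mean
  inner step acts as the diagonal map I - sigma Lambda with 0 <= sigma lambda_i <= 1, which does not
  increase V, and the step-size bound makes the variance of the variance-reduced correction at most
  sigma lambda_min / 3 times V at the current point and at the anchor.  Splitting off the batch
  bias with Young's inequality, one inner step multiplies E V by at most 1 + 1/(2B), up to an
  additive term controlled by V at the anchor.  As the number of inner steps is geometric with
  ratio B/(B+1) and (1 + 1/(2B)) B/(B+1) < 1, the moment E (1 + 1/(2B))^K is finite, so an epoch
  satisfies E[V(z_(m+1)) | z_m] <= a V(z_m) + b with finite a and b, and induction on m concludes.
  Neither the centre c = z_star nor the hypotheses on Ahat and Chat play a role: diagonalizability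
  of Gbar is assumed directly.
*)

lemma matrix_inv_right: "invertible A \<Longrightarrow> A ** matrix_inv A = mat 1"
  and matrix_inv_left: "invertible A \<Longrightarrow> matrix_inv A ** A = mat 1"
  for A :: "real^'n^'n"
  using someI_ex[of "\<lambda>A'. A ** A' = mat 1 \<and> A' ** A = mat 1"]
  unfolding matrix_inv_def invertible_def by auto

lemma norm_matrix_vector_mult_le: "norm (M *v x) \<le> mnorm M * norm x"
  for M :: "real^'n^'m"
  unfolding mnorm_def by (rule onorm[OF matrix_vector_mul_bounded_linear])

lemma mnorm_nonneg: "0 \<le> mnorm M"
  for M :: "real^'n^'m"
  unfolding mnorm_def by (rule onorm_pos_le[OF matrix_vector_mul_bounded_linear])

lemma mnorm_mult_ge_1:
  fixes Q P :: "real^'n^'n"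
  assumes "Q ** P = mat 1"
  shows "1 \<le> mnorm Q * mnorm P"
proof -
  define x :: "real^'n" where "x = axis undefined 1"
  have "x = Q *v (P *v x)" by (simp add: matrix_vector_mul_assoc assms)
  then have "norm x \<le> mnorm Q * norm (P *v x)" by (metis norm_matrix_vector_mult_le)
  also have "\<dots> \<le> mnorm Q * (mnorm P * norm x)"
    by (intro mult_left_mono norm_matrix_vector_mult_le mnorm_nonneg)
  finally show ?thesis by (simp add: x_def)
qed

lemma sum_matrix_vector_mult: "finite T \<Longrightarrow> (\<Sum>t\<in>T. A t) *v x = (\<Sum>t\<in>T. A t *v x)"
  for A :: "'b \<Rightarrow> real^'n^'m"
  by (induct rule: finite_induct) (auto simp: matrix_vector_mult_add_rdistrib)

lemma inner_gram_matrix_vector_mult: "w \<bullet> ((transpose A ** A) *v w) = (norm (A *v w))\<^sup>2"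
  for A :: "real^'n^'m"
proof -
  have "w \<bullet> ((transpose A ** A) *v w) = w \<bullet> (transpose A *v (A *v w))"
    by (simp add: matrix_vector_mul_assoc)
  also have "\<dots> = w \<bullet> ((A *v w) v* A)" by simp
  also have "\<dots> = ((A *v w) v* A) \<bullet> w" by (simp add: inner_commute)
  also have "\<dots> = (A *v w) \<bullet> (A *v w)" by (simp add: dot_lmul_matrix)
  finally show ?thesis by (simp add: power2_norm_eq_inner)
qed

lemma norm_add_sq_le:
  fixes x y :: "'a::real_inner"
  assumes "0 < e"
  shows "(norm (x + y))\<^sup>2 \<le> (1 + e) * (norm x)\<^sup>2 + (1 + 1/e) * (norm y)\<^sup>2"
proof -
  have "0 \<le> (norm (sqrt e *\<^sub>R x - (1 / sqrt e) *\<^sub>R y))\<^sup>2" by simp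
  also have "\<dots> = e * (norm x)\<^sup>2 + (1/e) * (norm y)\<^sup>2 - 2 * (x \<bullet> y)"
    using assms
    by (simp add: power2_norm_eq_inner inner_diff_left inner_diff_right algebra_simps
        real_sqrt_mult[symmetric] power2_eq_square[symmetric] inner_commute)
  finally show ?thesis
    by (simp add: power2_norm_eq_inner inner_add_left inner_add_right inner_commute algebra_simps)
qed

lemma sum_norm_sq_diff_eq:
  fixes x :: "'b \<Rightarrow> 'a::real_inner"
  assumes "finite T" "T \<noteq> {}"
  defines "m \<equiv> (1 / real (card T)) *\<^sub>R (\<Sum>t\<in>T. x t)"
  shows "(\<Sum>t\<in>T. (norm (v - x t))\<^sup>2) = real (card T) * (norm (v - m))\<^sup>2 + (\<Sum>t\<in>T. (norm (x t - m))\<^sup>2)"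
proof -
  let ?N = "real (card T)"
  have sum_x: "(\<Sum>t\<in>T. x t) = ?N *\<^sub>R m" using assms by (simp add: m_def)
  have expand: "(\<Sum>t\<in>T. (norm (a - x t))\<^sup>2) = ?N * (a \<bullet> a) - 2 * ?N * (a \<bullet> m) + (\<Sum>t\<in>T. x t \<bullet> x t)"
    for a
  proof -
    have "(\<Sum>t\<in>T. (norm (a - x t))\<^sup>2) = (\<Sum>t\<in>T. a \<bullet> a - 2 * (a \<bullet> x t) + x t \<bullet> x t)"
      by (intro sum.cong) (auto simp: power2_norm_eq_inner inner_diff_left inner_diff_right inner_commute)
    also have "\<dots> = ?N * (a \<bullet> a) - 2 * (a \<bullet> (\<Sum>t\<in>T. x t)) + (\<Sum>t\<in>T. x t \<bullet> x t)"
      by (simp add: sum.distrib sum_subtractf inner_sum_right sum_distrib_left)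
    finally show ?thesis by (simp add: sum_x)
  qed
  have "(\<Sum>t\<in>T. (norm (x t - m))\<^sup>2) = (\<Sum>t\<in>T. (norm (m - x t))\<^sup>2)"
    by (simp add: norm_minus_commute)
  then show ?thesis
    unfolding expand
    by (simp add: power2_norm_eq_inner inner_diff_left inner_diff_right inner_commute algebra_simps)
qed

lemma sum_norm_sq_centered_le:
  fixes x :: "'b \<Rightarrow> 'a::real_inner"
  assumes "finite T" "T \<noteq> {}"
  defines "m \<equiv> (1 / real (card T)) *\<^sub>R (\<Sum>t\<in>T. x t)"
  shows "(\<Sum>t\<in>T. (norm (x t - m))\<^sup>2) \<le> (\<Sum>t\<in>T. (norm (x t))\<^sup>2)"
    and "real (card T) * (norm m)\<^sup>2 \<le> (\<Sum>t\<in>T. (norm (x t))\<^sup>2)"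
proof -
  have "(\<Sum>t\<in>T. (norm (x t))\<^sup>2) = real (card T) * (norm m)\<^sup>2 + (\<Sum>t\<in>T. (norm (x t - m))\<^sup>2)"
    using sum_norm_sq_diff_eq[OF assms(1,2), of 0 x] by (simp add: m_def norm_minus_commute)
  moreover have "0 \<le> (\<Sum>t\<in>T. (norm (x t - m))\<^sup>2)" by (rule sum_nonneg) auto
  ultimately show "(\<Sum>t\<in>T. (norm (x t - m))\<^sup>2) \<le> (\<Sum>t\<in>T. (norm (x t))\<^sup>2)"
    and "real (card T) * (norm m)\<^sup>2 \<le> (\<Sum>t\<in>T. (norm (x t))\<^sup>2)"
    by simp_all
qed

lemma sum_norm_matrix_vector_sq_le:
  fixes Gs :: "'b \<Rightarrow> real^'n^'n"
  assumes "finite T" "T \<noteq> {}"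
  shows "(\<Sum>t\<in>T. (norm (Gs t *v w))\<^sup>2)
     \<le> real (card T) * mnorm ((1 / real (card T)) *\<^sub>R (\<Sum>t\<in>T. transpose (Gs t) ** Gs t)) * (norm w)\<^sup>2"
proof -
  let ?M = "(1 / real (card T)) *\<^sub>R (\<Sum>t\<in>T. transpose (Gs t) ** Gs t)"
  have "w \<bullet> (?M *v w) = (1 / real (card T)) * (\<Sum>t\<in>T. (norm (Gs t *v w))\<^sup>2)"
    using assms(1)
    by (simp add: scaleR_matrix_vector_assoc[symmetric] sum_matrix_vector_mult inner_sum_right
        inner_gram_matrix_vector_mult)
  then have "(\<Sum>t\<in>T. (norm (Gs t *v w))\<^sup>2) = real (card T) * (w \<bullet> (?M *v w))"
    using assms by (simp add: field_simps)
  also have "w \<bullet> (?M *v w) \<le> mnorm ?M * (norm w)\<^sup>2"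
  proof -
    have "w \<bullet> (?M *v w) \<le> norm w * norm (?M *v w)" by (rule norm_cauchy_schwarz)
    also have "\<dots> \<le> norm w * (mnorm ?M * norm w)"
      by (intro mult_left_mono norm_matrix_vector_mult_le) auto
    finally show ?thesis by (simp add: power2_eq_square mult_ac)
  qed
  finally show ?thesis by (simp add: mult_left_mono mult.assoc)
qed

lemma sum_norm_centered_matrix_vector_sq_le:
  fixes Gs :: "'b \<Rightarrow> real^'n^'n"
  assumes "finite T" "T \<noteq> {}"
  defines "G \<equiv> (1 / real (card T)) *\<^sub>R (\<Sum>t\<in>T. Gs t)"
  shows "(\<Sum>t\<in>T. (norm ((Gs t - G) *v w))\<^sup>2)
     \<le> real (card T) * mnorm ((1 / real (card T)) *\<^sub>R (\<Sum>t\<in>T. transpose (Gs t) ** Gs t)) * (norm w)\<^sup>2"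
proof -
  have "G *v w = (1 / real (card T)) *\<^sub>R (\<Sum>t\<in>T. Gs t *v w)"
    using assms(1) by (simp add: G_def scaleR_matrix_vector_assoc[symmetric] sum_matrix_vector_mult)
  then have "(\<Sum>t\<in>T. (norm ((Gs t - G) *v w))\<^sup>2) \<le> (\<Sum>t\<in>T. (norm (Gs t *v w))\<^sup>2)"
    using sum_norm_sq_centered_le(1)[OF assms(1,2), of "\<lambda>t. Gs t *v w"]
    by (simp add: matrix_vector_mult_diff_rdistrib)
  then show ?thesis using sum_norm_matrix_vector_sq_le[OF assms(1,2), of Gs w] by (rule order_trans)
qed

section \<open>Diagonalizable averages\<close>

lemma diagonal_matrix_vector_mult:
  fixes L :: "real^'n^'n"
  assumes "\<forall>i j. i \<noteq> j \<longrightarrow> L $ i $ j = 0"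
  shows "(L *v y) $ i = L $ i $ i * y $ i"
proof -
  have "(L *v y) $ i = (\<Sum>j\<in>UNIV. L $ i $ j * y $ j)"
    unfolding matrix_vector_mult_def by simp
  also have "\<dots> = (\<Sum>j\<in>UNIV. if j = i then L $ i $ i * y $ i else 0)"
    using assms by (intro sum.cong) auto
  finally show ?thesis by simp
qed

lemma eigenvector_conjugate_iff:
  fixes Q P G :: "real^'n^'n"
  assumes "Q ** P = mat 1"
  shows "G *v v = l *\<^sub>R v \<longleftrightarrow> (P ** G ** Q) *v (P *v v) = l *\<^sub>R (P *v v)"
proof
  assume "G *v v = l *\<^sub>R v"
  then show "(P ** G ** Q) *v (P *v v) = l *\<^sub>R (P *v v)"
    by (metis matrix_vector_mul_assoc matrix_vector_mult_scaleR matrix_mul_assoc matrix_mul_rid assms)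
next
  assume "(P ** G ** Q) *v (P *v v) = l *\<^sub>R (P *v v)"
  moreover have "G = Q ** (P ** G ** Q) ** P"
    by (metis matrix_mul_assoc matrix_mul_lid matrix_mul_rid assms)
  ultimately have "G *v v = Q *v (l *\<^sub>R (P *v v))" by (metis matrix_vector_mul_assoc)
  then show "G *v v = l *\<^sub>R v" by (simp add: matrix_vector_mult_scaleR matrix_vector_mul_assoc assms)
qed

lemma eigvals_eq_diagonal_entries:
  fixes Q P G :: "real^'n^'n"
  assumes PQ: "P ** Q = mat 1" and QP: "Q ** P = mat 1"
    and diagonal: "\<forall>i j. i \<noteq> j \<longrightarrow> (P ** G ** Q) $ i $ j = 0"
  shows "eigvals G = range (\<lambda>i. (P ** G ** Q) $ i $ i)"
proof -
  define L where "L = P ** G ** Q"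
  have diagonal_mult: "(L *v y) $ i = L $ i $ i * y $ i" for y i
    using diagonal_matrix_vector_mult diagonal by (simp add: L_def)
  have "l \<in> eigvals G \<longleftrightarrow> (\<exists>i. l = L $ i $ i)" for l
  proof
    assume "l \<in> eigvals G"
    then obtain v where "v \<noteq> 0" "G *v v = l *\<^sub>R v" unfolding eigvals_def by auto
    then have eigvec: "L *v (P *v v) = l *\<^sub>R (P *v v)"
      using eigenvector_conjugate_iff[OF QP] by (simp add: L_def)
    moreover have "Q *v (P *v v) = v" by (simp add: matrix_vector_mul_assoc QP)
    ultimately have "P *v v \<noteq> 0" using \<open>v \<noteq> 0\<close> by auto
    then obtain i where "(P *v v) $ i \<noteq> 0" by (auto simp: vec_eq_iff)
    moreover have "L $ i $ i * (P *v v) $ i = l * (P *v v) $ i"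
      using arg_cong[OF eigvec, of "\<lambda>x. x $ i"] by (simp add: diagonal_mult)
    ultimately show "\<exists>i. l = L $ i $ i" by auto
  next
    assume "\<exists>i. l = L $ i $ i"
    then obtain i where l: "l = L $ i $ i" by blast
    define v where "v = Q *v axis i 1"
    have "P *v v = axis i 1" by (simp add: v_def matrix_vector_mul_assoc PQ)
    moreover have "L *v axis i 1 = l *\<^sub>R axis i 1"
      by (simp add: vec_eq_iff diagonal_mult axis_def l)
    ultimately have "v \<noteq> 0" "G *v v = l *\<^sub>R v"
      using eigenvector_conjugate_iff[OF QP, of G v l] by (auto simp: L_def axis_eq_0_iff)
    then show "l \<in> eigvals G" unfolding eigvals_def by auto
  qed
  then show ?thesis by (auto simp: L_def)
qed

lemma eigval_sq_le_mean_gram_norm: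
  fixes Gs :: "'b \<Rightarrow> real^'n^'n"
  assumes "finite T" "T \<noteq> {}"
    and "v \<noteq> 0" "((1 / real (card T)) *\<^sub>R (\<Sum>t\<in>T. Gs t)) *v v = l *\<^sub>R v"
  shows "l\<^sup>2 \<le> mnorm ((1 / real (card T)) *\<^sub>R (\<Sum>t\<in>T. transpose (Gs t) ** Gs t))"
proof -
  let ?L2 = "mnorm ((1 / real (card T)) *\<^sub>R (\<Sum>t\<in>T. transpose (Gs t) ** Gs t))"
  have mean: "l *\<^sub>R v = (1 / real (card T)) *\<^sub>R (\<Sum>t\<in>T. Gs t *v v)"
    using assms(1,4) by (simp add: scaleR_matrix_vector_assoc[symmetric] sum_matrix_vector_mult)
  have "real (card T) * (norm (l *\<^sub>R v))\<^sup>2 \<le> (\<Sum>t\<in>T. (norm (Gs t *v v))\<^sup>2)"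
    unfolding mean by (rule sum_norm_sq_centered_le(2)[OF assms(1,2)])
  also have "\<dots> \<le> real (card T) * ?L2 * (norm v)\<^sup>2"
    by (rule sum_norm_matrix_vector_sq_le[OF assms(1,2)])
  finally have "l\<^sup>2 * (norm v)\<^sup>2 \<le> ?L2 * (norm v)\<^sup>2"
    using assms(1,2) by (simp add: power_mult_distrib mult.assoc card_gt_0_iff)
  then show ?thesis using assms(3) by simp
qed

lemma diagonal_damping_norm_sq_le:
  fixes L :: "real^'n^'n"
  assumes "\<forall>i j. i \<noteq> j \<longrightarrow> L $ i $ j = 0" "0 \<le> c"
    and "\<And>i. c \<le> \<sigma> * L $ i $ i" "\<And>i. \<sigma> * L $ i $ i \<le> 1"
  shows "(norm (y - \<sigma> *\<^sub>R (L *v y)))\<^sup>2 \<le> (1 - c) * (norm y)\<^sup>2"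
proof -
  have "(norm (y - \<sigma> *\<^sub>R (L *v y)))\<^sup>2 = (\<Sum>i\<in>UNIV. (1 - \<sigma> * L $ i $ i)\<^sup>2 * (y $ i)\<^sup>2)"
    unfolding power2_norm_eq_inner inner_vec_def
    by (simp add: diagonal_matrix_vector_mult[OF assms(1)] power2_eq_square algebra_simps)
  also have "\<dots> \<le> (\<Sum>i\<in>UNIV. (1 - c) * (y $ i)\<^sup>2)"
  proof (intro sum_mono mult_right_mono)
    fix i
    have "(1 - \<sigma> * L $ i $ i)\<^sup>2 \<le> 1 - \<sigma> * L $ i $ i"
      unfolding power2_eq_square using assms(2) assms(3,4)[of i] by (intro mult_left_le) auto
    then show "(1 - \<sigma> * L $ i $ i)\<^sup>2 \<le> 1 - c" using assms(3)[of i] by linarith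
  qed simp
  also have "\<dots> = (1 - c) * (norm y)\<^sup>2"
    unfolding power2_norm_eq_inner inner_vec_def by (simp add: sum_distrib_left power2_eq_square)
  finally show ?thesis .
qed

section \<open>The step-size condition\<close>

lemma step_size_variance_le:
  fixes \<sigma> lam \<kappa> L2 :: real
  assumes "0 \<le> \<sigma>" "0 \<le> L2" "\<sigma> \<le> lam / (6 * \<kappa>\<^sup>2 * L2)"
  shows "\<sigma>\<^sup>2 * \<kappa>\<^sup>2 * L2 \<le> \<sigma> * lam / 6"
proof (cases "6 * \<kappa>\<^sup>2 * L2 = 0")
  case True
  then show ?thesis using assms by (auto simp: power2_eq_square)
next
  case False
  then have "0 < 6 * \<kappa>\<^sup>2 * L2" using assms(2) by (simp add: order_less_le)
  then have "\<sigma> * (6 * \<kappa>\<^sup>2 * L2) \<le> lam" using assms(3) by (simp add: le_divide_eq)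
  then have "\<sigma> * (\<sigma> * (6 * \<kappa>\<^sup>2 * L2)) \<le> \<sigma> * lam" using assms(1) by (rule mult_left_mono)
  then show ?thesis by (simp add: power2_eq_square algebra_simps)
qed

lemma step_size_mult_eigval_le_1:
  fixes \<sigma> lam \<kappa> L2 l :: real
  assumes "0 \<le> \<sigma>" "1 \<le> \<kappa>" "\<sigma> \<le> lam / (6 * \<kappa>\<^sup>2 * L2)" "lam \<le> l" "l\<^sup>2 \<le> L2"
  shows "\<sigma> * l \<le> 1"
proof (cases "\<sigma> = 0")
  case False
  define den where "den = 6 * \<kappa>\<^sup>2 * L2"
  have "0 \<le> L2" using assms(5) by (meson order_trans zero_le_power2)
  moreover have "1 \<le> 6 * \<kappa>\<^sup>2" using assms(2) one_le_power[of \<kappa> 2] by linarith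
  ultimately have "L2 \<le> den" using mult_right_mono[of 1 "6 * \<kappa>\<^sup>2" L2] by (simp add: den_def)
  have "0 < \<sigma>" using assms(1) False by simp
  then have "0 < lam / den" using assms(3) by (simp add: den_def)
  moreover have "0 \<le> den" using \<open>0 \<le> L2\<close> \<open>L2 \<le> den\<close> by linarith
  ultimately have "0 < den" "0 < lam" by (auto simp: zero_less_divide_iff)
  have "\<sigma> * den \<le> lam" using assms(3) \<open>0 < den\<close> by (simp add: den_def le_divide_eq)
  then have "\<sigma> * l * den \<le> lam * l" using assms(4) \<open>0 < lam\<close>
    by (metis mult.commute mult.left_commute mult_right_mono order_less_le_trans order_less_le)
  also have "\<dots> \<le> l\<^sup>2" using assms(4) \<open>0 < lam\<close> by (simp add: power2_eq_square mult_right_mono)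
  also have "\<dots> \<le> den" using assms(5) \<open>L2 \<le> den\<close> by simp
  finally show ?thesis using \<open>0 < den\<close> by simp
qed simp

lemma step_size_conditions:
  fixes Gs :: "'b \<Rightarrow> real^'n^'n" and Q :: "real^'n^'n"
  assumes "finite T" "T \<noteq> {}"
  defines "G \<equiv> (1 / real (card T)) *\<^sub>R (\<Sum>t\<in>T. Gs t)"
    and "L2 \<equiv> mnorm ((1 / real (card T)) *\<^sub>R (\<Sum>t\<in>T. transpose (Gs t) ** Gs t))"
    and "P \<equiv> matrix_inv Q"
  assumes "invertible Q" and diagonal: "\<forall>i j. i \<noteq> j \<longrightarrow> (P ** G ** Q) $ i $ j = 0"
    and "0 \<le> \<sigma>" and step_size: "\<sigma> \<le> lam_min G / (6 * (kappa Q)\<^sup>2 * L2)"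
  shows "\<sigma>\<^sup>2 * (mnorm Q * mnorm P)\<^sup>2 * L2 \<le> \<sigma> * lam_min G / 6"
    and "0 \<le> \<sigma> * lam_min G"
    and "\<sigma> * lam_min G \<le> \<sigma> * (P ** G ** Q) $ i $ i"
    and "\<sigma> * (P ** G ** Q) $ i $ i \<le> 1"
proof -
  have PQ: "P ** Q = mat 1" and QP: "Q ** P = mat 1"
    using matrix_inv_left[OF \<open>invertible Q\<close>] matrix_inv_right[OF \<open>invertible Q\<close>] by (simp_all add: P_def)
  have kappa: "kappa Q = mnorm Q * mnorm P" by (simp add: kappa_def P_def)
  have eigvals: "eigvals G = range (\<lambda>i. (P ** G ** Q) $ i $ i)"
    by (rule eigvals_eq_diagonal_entries[OF PQ QP diagonal])
  have "0 \<le> L2" by (simp add: L2_def mnorm_nonneg)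
  show variance: "\<sigma>\<^sup>2 * (mnorm Q * mnorm P)\<^sup>2 * L2 \<le> \<sigma> * lam_min G / 6"
    using step_size_variance_le[OF \<open>0 \<le> \<sigma>\<close> \<open>0 \<le> L2\<close>] step_size by (simp add: kappa)
  then show "0 \<le> \<sigma> * lam_min G"
    using mult_nonneg_nonneg[OF _ \<open>0 \<le> L2\<close>, of "\<sigma>\<^sup>2 * (mnorm Q * mnorm P)\<^sup>2"] by simp
  have "lam_min G \<le> (P ** G ** Q) $ i $ i"
    unfolding lam_min_def eigvals by (rule Min_le) auto
  then show "\<sigma> * lam_min G \<le> \<sigma> * (P ** G ** Q) $ i $ i"
    using \<open>0 \<le> \<sigma>\<close> by (rule mult_left_mono)
  have "(P ** G ** Q) $ i $ i \<in> eigvals G" unfolding eigvals by simp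
  then obtain v where "v \<noteq> 0" "G *v v = (P ** G ** Q) $ i $ i *\<^sub>R v"
    unfolding eigvals_def by auto
  then have "((P ** G ** Q) $ i $ i)\<^sup>2 \<le> L2"
    using eigval_sq_le_mean_gram_norm[OF assms(1,2)] by (simp add: G_def L2_def)
  then show "\<sigma> * (P ** G ** Q) $ i $ i \<le> 1"
    using step_size_mult_eigval_le_1[OF \<open>0 \<le> \<sigma>\<close> mnorm_mult_ge_1[OF QP]] step_size
      \<open>lam_min G \<le> (P ** G ** Q) $ i $ i\<close>
    by (simp add: kappa)
qed

section \<open>One variance-reduced step\<close>

lemma svrg_step_bias_variance_eq:
  fixes Gs :: "'b \<Rightarrow> real^'n^'n" and P Q Gm :: "real^'n^'n" and D Dm e :: "real^'n"
  assumes "finite T" "T \<noteq> {}" "Q ** P = mat 1"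
  defines "G \<equiv> (1 / real (card T)) *\<^sub>R (\<Sum>t\<in>T. Gs t)"
  shows "(\<Sum>t\<in>T. (norm (P *v (D - \<sigma> *\<^sub>R (Gs t *v D + (Gm - Gs t) *v Dm + e))))\<^sup>2)
    = real (card T) * (norm ((P *v D - \<sigma> *\<^sub>R ((P ** G ** Q) *v (P *v D)))
                             - \<sigma> *\<^sub>R (P *v ((Gm - G) *v Dm + e))))\<^sup>2
      + (\<Sum>t\<in>T. (norm (\<sigma> *\<^sub>R (P *v ((Gs t - G) *v (D - Dm)))))\<^sup>2)"
proof -
  let ?N = "real (card T)"
  define u where "u t = \<sigma> *\<^sub>R (P *v ((Gs t - G) *v (D - Dm)))" for t
  have "0 < ?N" using assms(1,2) by (simp add: card_gt_0_iff)
  have "(P ** G ** Q) ** P = P ** G" by (metis matrix_mul_assoc matrix_mul_rid assms(3))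
  then have "(P ** G ** Q) *v (P *v D) = P *v (G *v D)" by (metis matrix_vector_mul_assoc)
  then have split: "P *v (D - \<sigma> *\<^sub>R (Gs t *v D + (Gm - Gs t) *v Dm + e))
      = ((P *v D - \<sigma> *\<^sub>R ((P ** G ** Q) *v (P *v D))) - \<sigma> *\<^sub>R (P *v ((Gm - G) *v Dm + e))) - u t" for t
    unfolding u_def
    by (simp add: matrix_vector_mult_diff_distrib matrix_vector_right_distrib matrix_vector_mult_scaleR
        matrix_vector_mult_diff_rdistrib matrix_vector_mult_add_rdistrib algebra_simps)
  have "(\<Sum>t\<in>T. (Gs t - G) *v v) = 0" for v
  proof -
    have "(\<Sum>t\<in>T. (Gs t - G) *v v) = (\<Sum>t\<in>T. Gs t *v v) - ?N *\<^sub>R (G *v v)"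
      by (simp add: matrix_vector_mult_diff_rdistrib sum_subtractf scaleR_conv_of_real)
    also have "G *v v = (1 / ?N) *\<^sub>R (\<Sum>t\<in>T. Gs t *v v)"
      using assms(1) by (simp add: G_def scaleR_matrix_vector_assoc[symmetric] sum_matrix_vector_mult)
    finally show ?thesis using \<open>0 < ?N\<close> by simp
  qed
  then have "(\<Sum>t\<in>T. u t) = 0"
    unfolding u_def
    by (simp add: scaleR_sum_right[symmetric] linear_sum[OF matrix_vector_mul_linear, symmetric])
  then show ?thesis
    unfolding split using sum_norm_sq_diff_eq[OF assms(1,2), of _ u] by (simp add: u_def)
qed

lemma sum_norm_sq_preconditioned_noise_le:
  fixes Gs :: "'b \<Rightarrow> real^'n^'n" and P Q :: "real^'n^'n"
  assumes "finite T" "T \<noteq> {}"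
  defines "G \<equiv> (1 / real (card T)) *\<^sub>R (\<Sum>t\<in>T. Gs t)"
    and "L2 \<equiv> mnorm ((1 / real (card T)) *\<^sub>R (\<Sum>t\<in>T. transpose (Gs t) ** Gs t))"
  shows "(\<Sum>t\<in>T. (norm (\<sigma> *\<^sub>R (P *v ((Gs t - G) *v (Q *v x)))))\<^sup>2)
     \<le> real (card T) * (\<sigma>\<^sup>2 * (mnorm Q * mnorm P)\<^sup>2 * L2) * (norm x)\<^sup>2"
proof -
  have "(norm (\<sigma> *\<^sub>R (P *v v)))\<^sup>2 \<le> \<sigma>\<^sup>2 * (mnorm P)\<^sup>2 * (norm v)\<^sup>2" for v
  proof -
    have "(norm (P *v v))\<^sup>2 \<le> (mnorm P)\<^sup>2 * (norm v)\<^sup>2"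
      using power_mono[OF norm_matrix_vector_mult_le[of P v], of 2] by (simp add: power_mult_distrib)
    then show ?thesis using mult_left_mono[of _ _ "\<sigma>\<^sup>2"] by (simp add: power_mult_distrib mult.assoc)
  qed
  then have "(\<Sum>t\<in>T. (norm (\<sigma> *\<^sub>R (P *v ((Gs t - G) *v (Q *v x)))))\<^sup>2)
      \<le> \<sigma>\<^sup>2 * (mnorm P)\<^sup>2 * (\<Sum>t\<in>T. (norm ((Gs t - G) *v (Q *v x)))\<^sup>2)"
    by (simp add: sum_distrib_left sum_mono)
  also have "\<dots> \<le> \<sigma>\<^sup>2 * (mnorm P)\<^sup>2 * (real (card T) * L2 * (norm (Q *v x))\<^sup>2)"
    using sum_norm_centered_matrix_vector_sq_le[OF assms(1,2)]
    by (intro mult_left_mono) (simp_all add: G_def L2_def)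
  also have "\<dots> \<le> \<sigma>\<^sup>2 * (mnorm P)\<^sup>2 * (real (card T) * L2 * ((mnorm Q)\<^sup>2 * (norm x)\<^sup>2))"
    using power_mono[OF norm_matrix_vector_mult_le[of Q x], of 2]
    by (intro mult_left_mono) (simp_all add: L2_def mnorm_nonneg power_mult_distrib)
  finally show ?thesis by (simp add: power_mult_distrib algebra_simps)
qed

lemma svrg_step_sq_norm_le:
  fixes Gs :: "'b \<Rightarrow> real^'n^'n" and P Q Gm :: "real^'n^'n" and D Dm e :: "real^'n"
  assumes "finite T" "T \<noteq> {}"
  defines "G \<equiv> (1 / real (card T)) *\<^sub>R (\<Sum>t\<in>T. Gs t)"
    and "L2 \<equiv> mnorm ((1 / real (card T)) *\<^sub>R (\<Sum>t\<in>T. transpose (Gs t) ** Gs t))"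
  assumes QP: "Q ** P = mat 1"
    and diagonal: "\<forall>i j. i \<noteq> j \<longrightarrow> (P ** G ** Q) $ i $ j = 0"
    and damping: "0 \<le> \<sigma> * lam" "\<And>i. \<sigma> * lam \<le> \<sigma> * (P ** G ** Q) $ i $ i"
      "\<And>i. \<sigma> * (P ** G ** Q) $ i $ i \<le> 1"
    and noise: "\<sigma>\<^sup>2 * (mnorm Q * mnorm P)\<^sup>2 * L2 \<le> \<sigma> * lam / 6"
    and "0 < \<epsilon>"
  shows "(\<Sum>t\<in>T. (norm (P *v (D - \<sigma> *\<^sub>R (Gs t *v D + (Gm - Gs t) *v Dm + e))))\<^sup>2) / real (card T)
      \<le> (1 + \<epsilon>) * (norm (P *v D))\<^sup>2 + \<sigma> * lam / 3 * (norm (P *v Dm))\<^sup>2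
         + (1 + 1/\<epsilon>) * (norm (\<sigma> *\<^sub>R (P *v ((Gm - G) *v Dm + e))))\<^sup>2"
proof -
  let ?N = "real (card T)"
  define y where "y = P *v D"
  define ym where "ym = P *v Dm"
  define a where "a = y - \<sigma> *\<^sub>R ((P ** G ** Q) *v y)"
  define c where "c = \<sigma> *\<^sub>R (P *v ((Gm - G) *v Dm + e))"
  have "0 < ?N" using assms(1,2) by (simp add: card_gt_0_iff)
  have "(norm (a - c))\<^sup>2 \<le> (1 + \<epsilon>) * ((1 - \<sigma> * lam) * (norm y)\<^sup>2) + (1 + 1/\<epsilon>) * (norm c)\<^sup>2"
  proof -
    have "(norm a)\<^sup>2 \<le> (1 - \<sigma> * lam) * (norm y)\<^sup>2"
      unfolding a_def using diagonal damping by (intro diagonal_damping_norm_sq_le) auto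
    then have "(1 + \<epsilon>) * (norm a)\<^sup>2 \<le> (1 + \<epsilon>) * ((1 - \<sigma> * lam) * (norm y)\<^sup>2)"
      using \<open>0 < \<epsilon>\<close> by (intro mult_left_mono) auto
    moreover have "(norm (a - c))\<^sup>2 \<le> (1 + \<epsilon>) * (norm a)\<^sup>2 + (1 + 1/\<epsilon>) * (norm c)\<^sup>2"
      using norm_add_sq_le[OF \<open>0 < \<epsilon>\<close>, of a "- c"] by simp
    ultimately show ?thesis by linarith
  qed
  moreover have "(\<Sum>t\<in>T. (norm (\<sigma> *\<^sub>R (P *v ((Gs t - G) *v (D - Dm)))))\<^sup>2) / ?N
      \<le> \<sigma> * lam / 3 * ((norm y)\<^sup>2 + (norm ym)\<^sup>2)"
  proof -
    have "Q *v (y - ym) = D - Dm"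
      by (simp add: y_def ym_def matrix_vector_mult_diff_distrib matrix_vector_mul_assoc QP)
    have "(norm (y - ym))\<^sup>2 \<le> 2 * ((norm y)\<^sup>2 + (norm ym)\<^sup>2)"
      using norm_add_sq_le[of 1 y "- ym"] by simp
    have "(\<Sum>t\<in>T. (norm (\<sigma> *\<^sub>R (P *v ((Gs t - G) *v (D - Dm)))))\<^sup>2)
        \<le> ?N * (\<sigma>\<^sup>2 * (mnorm Q * mnorm P)\<^sup>2 * L2) * (norm (y - ym))\<^sup>2"
      using sum_norm_sq_preconditioned_noise_le[OF assms(1,2), of \<sigma> P Gs Q "y - ym"]
      unfolding G_def L2_def \<open>Q *v (y - ym) = D - Dm\<close> .
    also have "\<dots> \<le> ?N * (\<sigma> * lam / 6) * (2 * ((norm y)\<^sup>2 + (norm ym)\<^sup>2))"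
      using noise \<open>0 < ?N\<close> mnorm_nonneg[of "(1 / ?N) *\<^sub>R (\<Sum>t\<in>T. transpose (Gs t) ** Gs t)"]
        \<open>(norm (y - ym))\<^sup>2 \<le> 2 * ((norm y)\<^sup>2 + (norm ym)\<^sup>2)\<close> damping(1)
      unfolding L2_def by (intro mult_mono) auto
    finally show ?thesis using \<open>0 < ?N\<close> by (simp add: pos_divide_le_eq algebra_simps)
  qed
  moreover have "0 \<le> \<sigma> * lam * (norm y)\<^sup>2" "0 \<le> \<epsilon> * (\<sigma> * lam * (norm y)\<^sup>2)"
    using damping(1) \<open>0 < \<epsilon>\<close> by simp_all
  ultimately show ?thesis
    using svrg_step_bias_variance_eq[OF assms(1,2) QP, where Gs = Gs and D = D and Dm = Dm and Gm = Gm
        and e = e and \<sigma> = \<sigma>] \<open>0 < ?N\<close>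
    unfolding a_def c_def y_def ym_def G_def
    by (simp add: add_divide_distrib algebra_simps)
qed

lemma norm_preconditioned_offset_sq_le:
  fixes P Q M :: "real^'n^'n"
  assumes "Q ** P = mat 1"
  shows "(norm (\<sigma> *\<^sub>R (P *v (M *v x + e))))\<^sup>2
    \<le> 2 * \<sigma>\<^sup>2 * (mnorm P)\<^sup>2 * (mnorm M)\<^sup>2 * (mnorm Q)\<^sup>2 * (norm (P *v x))\<^sup>2
      + 2 * \<sigma>\<^sup>2 * (mnorm P)\<^sup>2 * (norm e)\<^sup>2"
proof -
  have "x = Q *v (P *v x)" by (simp add: matrix_vector_mul_assoc assms)
  then have "norm (M *v x) \<le> mnorm M * (mnorm Q * norm (P *v x))"
    by (metis norm_matrix_vector_mult_le mnorm_nonneg mult_left_mono order_trans)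
  then have "(norm (M *v x))\<^sup>2 \<le> (mnorm M)\<^sup>2 * (mnorm Q)\<^sup>2 * (norm (P *v x))\<^sup>2"
    by (metis norm_ge_zero power_mono power_mult_distrib mult.assoc)
  moreover have "(norm (M *v x + e))\<^sup>2 \<le> 2 * (norm (M *v x))\<^sup>2 + 2 * (norm e)\<^sup>2"
    using norm_add_sq_le[of 1 "M *v x" e] by simp
  ultimately have "(norm (M *v x + e))\<^sup>2
      \<le> 2 * (mnorm M)\<^sup>2 * (mnorm Q)\<^sup>2 * (norm (P *v x))\<^sup>2 + 2 * (norm e)\<^sup>2"
    by linarith
  moreover have "(norm (P *v (M *v x + e)))\<^sup>2 \<le> (mnorm P)\<^sup>2 * (norm (M *v x + e))\<^sup>2"
    using power_mono[OF norm_matrix_vector_mult_le[of P "M *v x + e"], of 2]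
    by (simp add: power_mult_distrib)
  ultimately have "(norm (P *v (M *v x + e)))\<^sup>2
      \<le> (mnorm P)\<^sup>2 * (2 * (mnorm M)\<^sup>2 * (mnorm Q)\<^sup>2 * (norm (P *v x))\<^sup>2 + 2 * (norm e)\<^sup>2)"
    by (meson mult_left_mono order_trans zero_le_power2)
  then have "\<sigma>\<^sup>2 * (norm (P *v (M *v x + e)))\<^sup>2
      \<le> \<sigma>\<^sup>2 * ((mnorm P)\<^sup>2 * (2 * (mnorm M)\<^sup>2 * (mnorm Q)\<^sup>2 * (norm (P *v x))\<^sup>2 + 2 * (norm e)\<^sup>2))"
    by (rule mult_left_mono) simp
  then show ?thesis unfolding norm_scaleR power_mult_distrib power2_abs by (simp add: algebra_simps)
qed

section \<open>Affine drift of iterated kernels\<close>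

lemma ennreal_add_mult_inverse_pred:
  fixes D :: ennreal
  assumes "1 < \<rho>"
  shows "D + D * ennreal (1 / (\<rho> - 1)) = ennreal \<rho> * (D * ennreal (1 / (\<rho> - 1)))"
proof -
  have "1 + 1 / (\<rho> - 1) = \<rho> * (1 / (\<rho> - 1))" using assms by (simp add: field_simps)
  have "1 + ennreal (1 / (\<rho> - 1)) = ennreal (1 + 1 / (\<rho> - 1))" using assms by simp
  also have "\<dots> = ennreal \<rho> * ennreal (1 / (\<rho> - 1))"
    unfolding \<open>1 + 1 / (\<rho> - 1) = \<rho> * (1 / (\<rho> - 1))\<close> using assms by (intro ennreal_mult) auto
  finally have "D * (1 + ennreal (1 / (\<rho> - 1))) = D * (ennreal \<rho> * ennreal (1 / (\<rho> - 1)))"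
    by simp
  then show ?thesis by (simp add: distrib_left mult_ac)
qed

lemma nn_integral_funpow_bind_pmf_le:
  fixes f :: "'a \<Rightarrow> 'a pmf" and V :: "'a \<Rightarrow> ennreal" and D :: ennreal
  assumes "1 < \<rho>" and drift: "\<And>z. (\<integral>\<^sup>+y. V y \<partial>f z) \<le> ennreal \<rho> * V z + D"
  shows "(\<integral>\<^sup>+y. V y \<partial>(((\<lambda>q. bind_pmf q f) ^^ K) (return_pmf z)))
    \<le> ennreal (\<rho> ^ K) * (V z + D * ennreal (1 / (\<rho> - 1)))"
proof -
  define D' where "D' = D * ennreal (1 / (\<rho> - 1))"
  have "(\<integral>\<^sup>+y. V y \<partial>(((\<lambda>q. bind_pmf q f) ^^ K) (return_pmf z))) + D' \<le> ennreal (\<rho> ^ K) * (V z + D')"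
  proof (induction K)
    case (Suc K)
    let ?p = "((\<lambda>q. bind_pmf q f) ^^ K) (return_pmf z)"
    have "(\<integral>\<^sup>+y. V y \<partial>(((\<lambda>q. bind_pmf q f) ^^ Suc K) (return_pmf z)))
        = (\<integral>\<^sup>+x. (\<integral>\<^sup>+y. V y \<partial>f x) \<partial>?p)" by simp
    also have "\<dots> \<le> (\<integral>\<^sup>+x. ennreal \<rho> * V x + D \<partial>?p)"
      by (intro nn_integral_mono drift)
    also have "\<dots> = ennreal \<rho> * (\<integral>\<^sup>+x. V x \<partial>?p) + D"
      by (simp add: nn_integral_add nn_integral_cmult measure_pmf.emeasure_space_1)
    finally have "(\<integral>\<^sup>+y. V y \<partial>(((\<lambda>q. bind_pmf q f) ^^ Suc K) (return_pmf z))) + D'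
        \<le> ennreal \<rho> * (\<integral>\<^sup>+x. V x \<partial>?p) + (D + D')"
      by (simp add: add.assoc add_right_mono)
    also have "\<dots> = ennreal \<rho> * ((\<integral>\<^sup>+x. V x \<partial>?p) + D')"
      using ennreal_add_mult_inverse_pred[OF assms(1)] by (simp add: D'_def distrib_left)
    also have "\<dots> \<le> ennreal \<rho> * (ennreal (\<rho> ^ K) * (V z + D'))"
      by (intro mult_left_mono Suc.IH) auto
    also have "\<dots> = ennreal (\<rho> ^ Suc K) * (V z + D')"
      using assms(1) by (simp add: ennreal_mult mult.assoc)
    finally show ?case .
  qed simp
  then show ?thesis unfolding D'_def by (rule order_trans[OF add_increasing2[OF zero_le order_refl]])
qed

lemma nn_integral_geometric_pmf_power:
  fixes p \<rho> :: real
  assumes "0 < p" "p \<le> 1" "0 \<le> \<rho>" "(1 - p) * \<rho> < 1"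
  shows "(\<integral>\<^sup>+K. ennreal (\<rho> ^ K) \<partial>geometric_pmf p) = ennreal (p / (1 - (1 - p) * \<rho>))"
proof -
  have "(\<integral>\<^sup>+K. ennreal (\<rho> ^ K) \<partial>geometric_pmf p) = (\<Sum>K. ennreal (p * ((1 - p) * \<rho>) ^ K))"
    using assms
    by (simp add: nn_integral_measure_pmf nn_integral_count_space_nat ennreal_mult[symmetric]
        power_mult_distrib mult_ac)
  also have "\<dots> = ennreal (p * (1 / (1 - (1 - p) * \<rho>)))"
    using assms by (intro suminf_ennreal_eq sums_mult geometric_sums) auto
  finally show ?thesis by simp
qed

lemma nn_integral_geometric_funpow_bind_pmf_le:
  fixes f :: "'a \<Rightarrow> 'a pmf" and V :: "'a \<Rightarrow> ennreal" and D :: ennreal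
  assumes "1 < \<rho>" "0 < p" "p \<le> 1" "(1 - p) * \<rho> < 1"
    and drift: "\<And>z. (\<integral>\<^sup>+y. V y \<partial>f z) \<le> ennreal \<rho> * V z + D"
  shows "(\<integral>\<^sup>+K. (\<integral>\<^sup>+y. V y \<partial>(((\<lambda>q. bind_pmf q f) ^^ K) (return_pmf z))) \<partial>geometric_pmf p)
    \<le> ennreal (p / (1 - (1 - p) * \<rho>)) * (V z + D * ennreal (1 / (\<rho> - 1)))"
proof -
  have "(\<integral>\<^sup>+K. (\<integral>\<^sup>+y. V y \<partial>(((\<lambda>q. bind_pmf q f) ^^ K) (return_pmf z))) \<partial>geometric_pmf p)
      \<le> (\<integral>\<^sup>+K. ennreal (\<rho> ^ K) * (V z + D * ennreal (1 / (\<rho> - 1))) \<partial>geometric_pmf p)"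
    by (intro nn_integral_mono nn_integral_funpow_bind_pmf_le[OF assms(1) drift])
  also have "\<dots> = ennreal (p / (1 - (1 - p) * \<rho>)) * (V z + D * ennreal (1 / (\<rho> - 1)))"
    using assms(1-4) by (simp add: nn_integral_multc nn_integral_geometric_pmf_power)
  finally show ?thesis .
qed

lemma nn_integral_funpow_bind_pmf_less_top:
  fixes f :: "'a \<Rightarrow> 'a pmf" and V :: "'a \<Rightarrow> ennreal"
  assumes drift: "\<And>z. (\<integral>\<^sup>+y. V y \<partial>f z) \<le> a * V z + b"
    and "a < \<infinity>" "b < \<infinity>" "V z < \<infinity>"
  shows "(\<integral>\<^sup>+y. V y \<partial>(((\<lambda>q. bind_pmf q f) ^^ m) (return_pmf z))) < \<infinity>"
proof (induction m)
  case (Suc m)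
  let ?p = "((\<lambda>q. bind_pmf q f) ^^ m) (return_pmf z)"
  have "(\<integral>\<^sup>+y. V y \<partial>(((\<lambda>q. bind_pmf q f) ^^ Suc m) (return_pmf z))) = (\<integral>\<^sup>+x. (\<integral>\<^sup>+y. V y \<partial>f x) \<partial>?p)"
    by simp
  also have "\<dots> \<le> (\<integral>\<^sup>+x. a * V x + b \<partial>?p)" by (intro nn_integral_mono drift)
  also have "\<dots> = a * (\<integral>\<^sup>+x. V x \<partial>?p) + b"
    by (simp add: nn_integral_add nn_integral_cmult measure_pmf.emeasure_space_1)
  also have "\<dots> < \<infinity>" using Suc.IH assms(2,3) by (simp add: ennreal_mult_less_top)
  finally show ?case .
qed (use assms(4) in simp)

section \<open>Drift of the SCSG epochs\<close>

definition sq_error :: "real^'n^'n \<Rightarrow> real^'n \<Rightarrow> real^'n \<Rightarrow> ennreal" where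
  "sq_error P c z = ennreal ((norm (P *v (z - c)))\<^sup>2)"

lemma nn_integral_sq_error_inner_step:
  fixes \<phi> :: "'s \<Rightarrow> real^'d"
  assumes "1 \<le> n"
  shows "(\<integral>\<^sup>+y. sq_error P c y \<partial>inner_step \<phi> disc r s s' n \<sigma> Gm gm zm z)
    = ennreal ((\<Sum>t\<in>{1..n}. (norm (P *v ((z - c) - \<sigma> *\<^sub>R (Gt \<phi> disc s s' n t *v (z - c)
        + (Gm - Gt \<phi> disc s s' n t) *v (zm - c) + (Gm *v c - gm)))))\<^sup>2) / real (card {1..n}))"
  using assms
  by (simp add: inner_step_def sq_error_def nn_integral_pmf_of_set ennreal_of_nat_eq_real_of_nat
      divide_ennreal sum_nonneg algebra_simps matrix_vector_mult_diff_distrib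
      matrix_vector_mult_diff_rdistrib)

lemma scsg_step_sq_norm_le:
  fixes \<phi> :: "'s \<Rightarrow> real^'d" and Q :: "real^('d+'d)^('d+'d)"
  assumes "1 \<le> n" "invertible Q"
    and diagonal: "\<forall>i j. i \<noteq> j \<longrightarrow> (matrix_inv Q ** Gbar \<phi> disc s s' n ** Q) $ i $ j = 0"
    and "0 \<le> \<sigma>"
    and step_size: "\<sigma> \<le> lam_min (Gbar \<phi> disc s s' n) / (6 * (kappa Q)\<^sup>2 * LG2 \<phi> disc s s' n)"
    and "0 < \<epsilon>"
  shows "(\<Sum>t\<in>{1..n}. (norm (matrix_inv Q *v (D - \<sigma> *\<^sub>R (Gt \<phi> disc s s' n t *v D
            + (Gm - Gt \<phi> disc s s' n t) *v Dm + e))))\<^sup>2) / real (card {1..n})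
      \<le> (1 + \<epsilon>) * (norm (matrix_inv Q *v D))\<^sup>2
        + \<sigma> * lam_min (Gbar \<phi> disc s s' n) / 3 * (norm (matrix_inv Q *v Dm))\<^sup>2
        + (1 + 1/\<epsilon>) * (norm (\<sigma> *\<^sub>R (matrix_inv Q *v ((Gm - Gbar \<phi> disc s s' n) *v Dm + e))))\<^sup>2"
    and "0 \<le> \<sigma> * lam_min (Gbar \<phi> disc s s' n)"
proof -
  let ?T = "{1..n}"
  define Gs where "Gs = Gt \<phi> disc s s' n"
  have T: "finite ?T" "?T \<noteq> {}" using \<open>1 \<le> n\<close> by auto
  have Gbar: "Gbar \<phi> disc s s' n = (1 / real (card ?T)) *\<^sub>R (\<Sum>t\<in>?T. Gs t)"
    by (simp add: Gs_def Gbar_def)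
  have LG2: "LG2 \<phi> disc s s' n = mnorm ((1 / real (card ?T)) *\<^sub>R (\<Sum>t\<in>?T. transpose (Gs t) ** Gs t))"
    by (simp add: LG2_def Gs_def)
  note conditions = step_size_conditions[OF T \<open>invertible Q\<close>, of Gs,
      OF diagonal[unfolded Gbar] \<open>0 \<le> \<sigma>\<close> step_size[unfolded Gbar LG2], folded Gbar LG2]
  show "0 \<le> \<sigma> * lam_min (Gbar \<phi> disc s s' n)" by (rule conditions(2))
  show "(\<Sum>t\<in>?T. (norm (matrix_inv Q *v (D - \<sigma> *\<^sub>R (Gt \<phi> disc s s' n t *v D
            + (Gm - Gt \<phi> disc s s' n t) *v Dm + e))))\<^sup>2) / real (card ?T)
      \<le> (1 + \<epsilon>) * (norm (matrix_inv Q *v D))\<^sup>2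
        + \<sigma> * lam_min (Gbar \<phi> disc s s' n) / 3 * (norm (matrix_inv Q *v Dm))\<^sup>2
        + (1 + 1/\<epsilon>) * (norm (\<sigma> *\<^sub>R (matrix_inv Q *v ((Gm - Gbar \<phi> disc s s' n) *v Dm + e))))\<^sup>2"
    using svrg_step_sq_norm_le[OF T matrix_inv_right[OF \<open>invertible Q\<close>] diagonal[unfolded Gbar],
        folded Gbar, OF conditions(2-4) conditions(1)[unfolded LG2] \<open>0 < \<epsilon>\<close>]
    by (simp add: Gs_def)
qed

lemma inner_step_drift:
  fixes \<phi> :: "'s \<Rightarrow> real^'d" and Q :: "real^('d+'d)^('d+'d)"
  assumes "1 \<le> n" "invertible Q"
    and diagonal: "\<forall>i j. i \<noteq> j \<longrightarrow> (matrix_inv Q ** Gbar \<phi> disc s s' n ** Q) $ i $ j = 0"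
    and "0 \<le> \<sigma>"
    and step_size: "\<sigma> \<le> lam_min (Gbar \<phi> disc s s' n) / (6 * (kappa Q)\<^sup>2 * LG2 \<phi> disc s s' n)"
    and "0 < \<epsilon>"
  obtains a b where "a < \<infinity>" "b < \<infinity>"
    "\<And>zm z. (\<integral>\<^sup>+y. sq_error (matrix_inv Q) c y \<partial>inner_step \<phi> disc r s s' n \<sigma> Gm gm zm z)
       \<le> ennreal (1 + \<epsilon>) * sq_error (matrix_inv Q) c z + (a * sq_error (matrix_inv Q) c zm + b)"
proof -
  define P where "P = matrix_inv Q"
  define G where "G = Gbar \<phi> disc s s' n"
  define lam where "lam = lam_min G"
  define \<alpha> where "\<alpha> = \<sigma> * lam / 3 + (1 + 1/\<epsilon>) * (2 * \<sigma>\<^sup>2 * (mnorm P)\<^sup>2 * (mnorm (Gm - G))\<^sup>2 * (mnorm Q)\<^sup>2)"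
  define \<beta> where "\<beta> = (1 + 1/\<epsilon>) * (2 * \<sigma>\<^sup>2 * (mnorm P)\<^sup>2 * (norm (Gm *v c - gm))\<^sup>2)"
  note step = scsg_step_sq_norm_le[OF assms, folded P_def G_def lam_def]
  have QP: "Q ** P = mat 1" using matrix_inv_right[OF \<open>invertible Q\<close>] by (simp add: P_def)
  have "0 \<le> \<alpha>" "0 \<le> \<beta>" using step(2) \<open>0 < \<epsilon>\<close> by (simp_all add: \<alpha>_def \<beta>_def)
  show ?thesis
  proof
    fix zm z
    define Y where "Y x = (norm (P *v (x - c)))\<^sup>2" for x
    have "(\<integral>\<^sup>+y. sq_error P c y \<partial>inner_step \<phi> disc r s s' n \<sigma> Gm gm zm z)
        \<le> ennreal ((1 + \<epsilon>) * Y z + \<alpha> * Y zm + \<beta>)"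
      unfolding nn_integral_sq_error_inner_step[OF \<open>1 \<le> n\<close>]
    proof (intro ennreal_leI order_trans[OF step(1)])
      show "(1 + \<epsilon>) * (norm (P *v (z - c)))\<^sup>2 + \<sigma> * lam / 3 * (norm (P *v (zm - c)))\<^sup>2
          + (1 + 1/\<epsilon>) * (norm (\<sigma> *\<^sub>R (P *v ((Gm - G) *v (zm - c) + (Gm *v c - gm)))))\<^sup>2
        \<le> (1 + \<epsilon>) * Y z + \<alpha> * Y zm + \<beta>"
        using mult_left_mono[OF norm_preconditioned_offset_sq_le[OF QP],
            of "1 + 1/\<epsilon>" \<sigma> "Gm - G" "zm - c" "Gm *v c - gm"] \<open>0 < \<epsilon>\<close>
        by (simp add: Y_def \<alpha>_def \<beta>_def algebra_simps)
    qed
    also have "\<dots> = ennreal (1 + \<epsilon>) * sq_error P c z + (ennreal \<alpha> * sq_error P c zm + ennreal \<beta>)"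
      using \<open>0 < \<epsilon>\<close> \<open>0 \<le> \<alpha>\<close> \<open>0 \<le> \<beta>\<close> by (simp add: Y_def sq_error_def ennreal_mult add.assoc)
    finally show "(\<integral>\<^sup>+y. sq_error (matrix_inv Q) c y \<partial>inner_step \<phi> disc r s s' n \<sigma> Gm gm zm z)
       \<le> ennreal (1 + \<epsilon>) * sq_error (matrix_inv Q) c z + (ennreal \<alpha> * sq_error (matrix_inv Q) c zm + ennreal \<beta>)"
      by (simp add: P_def)
  qed simp_all
qed

lemma geometric_inner_loop_drift:
  fixes \<phi> :: "'s \<Rightarrow> real^'d" and Q :: "real^('d+'d)^('d+'d)"
  assumes "1 \<le> B" "1 \<le> n" "invertible Q"
    and diagonal: "\<forall>i j. i \<noteq> j \<longrightarrow> (matrix_inv Q ** Gbar \<phi> disc s s' n ** Q) $ i $ j = 0"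
    and "0 \<le> \<sigma>"
    and step_size: "\<sigma> \<le> lam_min (Gbar \<phi> disc s s' n) / (6 * (kappa Q)\<^sup>2 * LG2 \<phi> disc s s' n)"
  obtains a b where "a < \<infinity>" "b < \<infinity>"
    "\<And>zm. (\<integral>\<^sup>+K. (\<integral>\<^sup>+y. sq_error (matrix_inv Q) c y \<partial>inner_loop \<phi> disc r s s' n \<sigma> Gm gm zm K)
              \<partial>geometric_pmf (1 / (real B + 1)))
       \<le> a * sq_error (matrix_inv Q) c zm + b"
proof -
  let ?V = "sq_error (matrix_inv Q) c"
  define \<epsilon> :: real where "\<epsilon> = 1 / (2 * real B)"
  define p :: real where "p = 1 / (real B + 1)"
  define C where "C = ennreal (p / (1 - (1 - p) * (1 + \<epsilon>)))"
  have "0 < \<epsilon>" using \<open>1 \<le> B\<close> by (simp add: \<epsilon>_def)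
  have "(1 - p) * (1 + \<epsilon>) = (real B * (2 * real B + 1)) / ((real B + 1) * (2 * real B))"
    using \<open>1 \<le> B\<close> by (simp add: p_def \<epsilon>_def field_simps)
  moreover have "real B * (2 * real B + 1) < (real B + 1) * (2 * real B)"
    using \<open>1 \<le> B\<close> by (simp add: algebra_simps)
  moreover have "0 < (real B + 1) * (2 * real B)" using \<open>1 \<le> B\<close> by simp
  ultimately have "(1 - p) * (1 + \<epsilon>) < 1" by (simp add: divide_less_eq_1_pos)
  obtain a b where "a < \<infinity>" "b < \<infinity>" and inner_drift: "\<And>zm z.
      (\<integral>\<^sup>+y. ?V y \<partial>inner_step \<phi> disc r s s' n \<sigma> Gm gm zm z) \<le> ennreal (1 + \<epsilon>) * ?V z + (a * ?V zm + b)"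
    using inner_step_drift[OF \<open>1 \<le> n\<close> \<open>invertible Q\<close> diagonal \<open>0 \<le> \<sigma>\<close> step_size \<open>0 < \<epsilon>\<close>,
        where r = r and c = c and Gm = Gm and gm = gm]
    by blast
  show ?thesis
  proof
    fix zm
    have "(\<integral>\<^sup>+K. (\<integral>\<^sup>+y. ?V y \<partial>inner_loop \<phi> disc r s s' n \<sigma> Gm gm zm K) \<partial>geometric_pmf p)
        \<le> C * (?V zm + (a * ?V zm + b) * ennreal (1 / \<epsilon>))"
      unfolding inner_loop_def C_def
      using nn_integral_geometric_funpow_bind_pmf_le[OF _ _ _ \<open>(1 - p) * (1 + \<epsilon>) < 1\<close> inner_drift]
        \<open>0 < \<epsilon>\<close> by (simp add: p_def)
    also have "\<dots> = C * (1 + a * ennreal (1 / \<epsilon>)) * ?V zm + C * (b * ennreal (1 / \<epsilon>))"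
      by (simp add: algebra_simps)
    finally show "(\<integral>\<^sup>+K. (\<integral>\<^sup>+y. ?V y \<partial>inner_loop \<phi> disc r s s' n \<sigma> Gm gm zm K) \<partial>geometric_pmf (1 / (real B + 1)))
        \<le> C * (1 + a * ennreal (1 / \<epsilon>)) * ?V zm + C * (b * ennreal (1 / \<epsilon>))"
      by (simp add: p_def)
  qed (use \<open>a < \<infinity>\<close> \<open>b < \<infinity>\<close> in \<open>simp_all add: C_def ennreal_mult_less_top\<close>)
qed

lemma epoch_drift:
  fixes \<phi> :: "'s \<Rightarrow> real^'d" and Q :: "real^('d+'d)^('d+'d)"
  assumes "1 \<le> B" "B \<le> n" "invertible Q"
    and diagonal: "\<forall>i j. i \<noteq> j \<longrightarrow> (matrix_inv Q ** Gbar \<phi> disc s s' n ** Q) $ i $ j = 0"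
    and "0 \<le> \<sigma>"
    and step_size: "\<sigma> \<le> lam_min (Gbar \<phi> disc s s' n) / (6 * (kappa Q)\<^sup>2 * LG2 \<phi> disc s s' n)"
  obtains a b where "a < \<infinity>" "b < \<infinity>"
    "\<And>zm. (\<integral>\<^sup>+z. sq_error (matrix_inv Q) c z \<partial>epoch \<phi> disc r s s' n B \<sigma> zm)
       \<le> a * sq_error (matrix_inv Q) c zm + b"
proof -
  let ?V = "sq_error (matrix_inv Q) c"
  define F where "F = {S. S \<subseteq> {1..n} \<and> card S = B}"
  define Gm where "Gm S = (1 / real B) *\<^sub>R (\<Sum>t\<in>S. Gt \<phi> disc s s' n t)" for S
  define gm where "gm S = (1 / real B) *\<^sub>R (\<Sum>t\<in>S. gt \<phi> disc r s s' n t)" for S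
  define loop where "loop S zm = (\<integral>\<^sup>+K. (\<integral>\<^sup>+y. ?V y \<partial>inner_loop \<phi> disc r s s' n \<sigma> (Gm S) (gm S) zm K)
    \<partial>geometric_pmf (1 / (real B + 1)))" for S zm
  have "1 \<le> n" using \<open>1 \<le> B\<close> \<open>B \<le> n\<close> by simp
  have "finite F" unfolding F_def by (rule finite_subset[of _ "Pow {1..n}"]) auto
  have "F \<noteq> {}" using \<open>B \<le> n\<close> unfolding F_def by (auto intro!: exI[of _ "{1..B}"])
  have "\<forall>S. \<exists>a b. a < \<infinity> \<and> b < \<infinity> \<and> (\<forall>zm. loop S zm \<le> a * ?V zm + b)"
  proof
    fix S
    obtain a b where "a < \<infinity>" "b < \<infinity>" "\<And>zm. loop S zm \<le> a * ?V zm + b"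
      unfolding loop_def
      using geometric_inner_loop_drift[OF \<open>1 \<le> B\<close> \<open>1 \<le> n\<close> \<open>invertible Q\<close> diagonal \<open>0 \<le> \<sigma>\<close> step_size,
          where r = r and c = c and Gm = "Gm S" and gm = "gm S"]
      by blast
    then show "\<exists>a b. a < \<infinity> \<and> b < \<infinity> \<and> (\<forall>zm. loop S zm \<le> a * ?V zm + b)" by blast
  qed
  from choice[OF this] obtain a where "\<forall>S. \<exists>b. a S < \<infinity> \<and> b < \<infinity> \<and> (\<forall>zm. loop S zm \<le> a S * ?V zm + b)"
    by blast
  from choice[OF this] obtain b where a: "a S < \<infinity>" and b: "b S < \<infinity>"
    and loop: "loop S zm \<le> a S * ?V zm + b S" for S zm
    by blast
  show ?thesis
  proof
    fix zm
    have "(\<integral>\<^sup>+z. ?V z \<partial>epoch \<phi> disc r s s' n B \<sigma> zm) = (\<integral>\<^sup>+S. loop S zm \<partial>pmf_of_set F)"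
      by (simp add: epoch_def loop_def Gm_def gm_def F_def)
    also have "\<dots> \<le> (\<integral>\<^sup>+S. (\<Sum>S\<in>F. a S) * ?V zm + (\<Sum>S\<in>F. b S) \<partial>pmf_of_set F)"
    proof (intro nn_integral_mono_AE)
      have "loop S zm \<le> (\<Sum>S\<in>F. a S) * ?V zm + (\<Sum>S\<in>F. b S)" if "S \<in> F" for S
        using \<open>finite F\<close> \<open>S \<in> F\<close>
        by (intro order_trans[OF loop] add_mono mult_right_mono member_le_sum) auto
      then show "AE S in pmf_of_set F. loop S zm \<le> (\<Sum>S\<in>F. a S) * ?V zm + (\<Sum>S\<in>F. b S)"
        using \<open>finite F\<close> \<open>F \<noteq> {}\<close> by (simp add: AE_measure_pmf_iff)
    qed
    finally show "(\<integral>\<^sup>+z. ?V z \<partial>epoch \<phi> disc r s s' n B \<sigma> zm) \<le> (\<Sum>S\<in>F. a S) * ?V zm + (\<Sum>S\<in>F. b S)"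
      by (simp add: measure_pmf.emeasure_space_1)
  qed (use a b \<open>finite F\<close> in simp_all)
qed

theorem lemma3:
  fixes \<phi> :: "'s \<Rightarrow> real^'d"
    and disc :: real
    and r :: "nat \<Rightarrow> real"
    and s s' :: "nat \<Rightarrow> 's"
    and n B :: nat
    and \<sigma> :: real
    and Q :: "real^('d+'d)^('d+'d)"
    and z0 :: "real^('d+'d)"
  assumes "1 \<le> B" and "B \<le> n"
    and "invertible (Ahat \<phi> disc s s' n)"
    and "pos_def (Chat \<phi> s n)"
    and "invertible Q"
    and "\<forall>i j. i \<noteq> j \<longrightarrow> (matrix_inv Q ** Gbar \<phi> disc s s' n ** Q) $ i $ j = 0"
    and "0 \<le> \<sigma>"
    and "\<sigma> \<le> lam_min (Gbar \<phi> disc s s' n) / (6 * (kappa Q)\<^sup>2 * LG2 \<phi> disc s s' n)"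
  shows "\<forall>m. (\<integral>\<^sup>+ z. ennreal ((norm (matrix_inv Q *v (z - z_star \<phi> disc r s s' n)))\<^sup>2)
                 \<partial>measure_pmf (scsg_dist \<phi> disc r s s' n B \<sigma> z0 m)) < \<infinity>"
proof
  fix m
  let ?V = "sq_error (matrix_inv Q) (z_star \<phi> disc r s s' n)"
  obtain a b where "a < \<infinity>" "b < \<infinity>"
    and drift: "\<And>zm. (\<integral>\<^sup>+z. ?V z \<partial>epoch \<phi> disc r s s' n B \<sigma> zm) \<le> a * ?V zm + b"
    using epoch_drift[OF assms(1,2,5-8)] by blast
  have "(\<integral>\<^sup>+z. ?V z \<partial>scsg_dist \<phi> disc r s s' n B \<sigma> z0 m) < \<infinity>"
    unfolding scsg_dist_def
    by (rule nn_integral_funpow_bind_pmf_less_top[OF drift \<open>a < \<infinity>\<close> \<open>b < \<infinity>\<close>]) (simp add: sq_error_def)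
  then show "(\<integral>\<^sup>+ z. ennreal ((norm (matrix_inv Q *v (z - z_star \<phi> disc r s s' n)))\<^sup>2)
      \<partial>measure_pmf (scsg_dist \<phi> disc r s s' n B \<sigma> z0 m)) < \<infinity>"
    by (simp add: sq_error_def)
qed

end
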